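(* Let $k\ge1$ and $r\ge1$ be integers, let $\Gamma_1,\ldots,\Gamma_k$ be finite nilpotent groups and let $\Gamma$ be an abelian group (written multiplicatively) of rank at most $r$. Let $\varphi:\Gamma_1\times\cdots\times\Gamma_k\to\Gamma$ be a map that is a homomorphism in each variable. Writing $\varphi(\Gamma_1,\ldots,\Gamma_k)=\{\varphi(g_1,\ldots,g_k):g_i\in\Gamma_i\}$, we have \[ \langle\varphi(\Gamma_1,\ldots,\Gamma_k)\rangle\subset\varphi(\Gamma_1,\ldots,\Gamma_k)^r. \]
   Context: The rank of a group is the minimal cardinality of a generating set. For a subset $X$ of a group, $X^r$ denotes the $r$-fold product set $\{x_1\cdots x_r:x_i\in X\}$, and $\langle X\rangle$ the subgroup generated by $X$. A map is a homomorphism in each variable if fixing all but one argument yields a group homomorphism in the remaining argument. *)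

theory Defs
  imports "HOL-Algebra.Algebra"
begin

text \<open>Lower central series: gamma_1 = G, gamma_(n+1) = [gamma_n, G]
  (indexed from 0 here).\<close>
fun lower_central :: "('a, 'b) monoid_scheme \<Rightarrow> nat \<Rightarrow> 'a set" where
  "lower_central G 0 = carrier G"
| "lower_central G (Suc n) =
     generate G {x \<otimes>\<^bsub>G\<^esub> y \<otimes>\<^bsub>G\<^esub> inv\<^bsub>G\<^esub> x \<otimes>\<^bsub>G\<^esub> inv\<^bsub>G\<^esub> y
                 | x y. x \<in> lower_central G n \<and> y \<in> carrier G}"

definition nilpotent_group :: "('a, 'b) monoid_scheme \<Rightarrow> bool" where
  "nilpotent_group G \<longleftrightarrow> group G \<and> (\<exists>n. lower_central G n = {\<one>\<^bsub>G\<^esub>})"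

definition rank_le :: "('a, 'b) monoid_scheme \<Rightarrow> nat \<Rightarrow> bool" where
  "rank_le G r \<longleftrightarrow> (\<exists>S. S \<subseteq> carrier G \<and> finite S \<and> card S \<le> r \<and> generate G S = carrier G)"

primrec set_power :: "('a, 'b) monoid_scheme \<Rightarrow> 'a set \<Rightarrow> nat \<Rightarrow> 'a set" where
  "set_power G W 0 = {\<one>\<^bsub>G\<^esub>}"
| "set_power G W (Suc n) = {x \<otimes>\<^bsub>G\<^esub> y | x y. x \<in> W \<and> y \<in> set_power G W n}"

definition multihom ::
  "nat \<Rightarrow> (nat \<Rightarrow> ('a, 'b) monoid_scheme) \<Rightarrow> ('c, 'd) monoid_scheme \<Rightarrow> ((nat \<Rightarrow> 'a) \<Rightarrow> 'c) \<Rightarrow> bool" where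
  "multihom k G H \<phi> \<longleftrightarrow>
     (\<forall>g \<in> (\<Pi>\<^sub>E i\<in>{..<k}. carrier (G i)). \<phi> g \<in> carrier H) \<and>
     (\<forall>g \<in> (\<Pi>\<^sub>E i\<in>{..<k}. carrier (G i)). \<forall>i<k. \<forall>x \<in> carrier (G i). \<forall>y \<in> carrier (G i).
        \<phi> (g(i := x \<otimes>\<^bsub>G i\<^esub> y)) = \<phi> (g(i := x)) \<otimes>\<^bsub>H\<^esub> \<phi> (g(i := y)))"

end

theory Submission
  imports Defs "HOL-Number_Theory.Cong"
begin

text \<open>Let X be the image of \<phi> and N the order of the first factor. Then X is finite, contains 1,
  is closed under powers and has exponent N; moreover, expanding \<phi>(a_i^e b_i^f)_i by
  multiplicativity shows x^(e^k) y^(f^k) \<in> X for x, y \<in> X whenever N divides ef, since every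
  mixed term carries a factor of exponent ef. For such sets \<langle>X\<rangle> \<subseteq> X^r is proved by induction
  on N. If N = N1 N2 with coprime factors, the idempotents u, v of \<int>/N split every a \<in> \<langle>X\<rangle>
  as a^u a^v, where a^u and a^v lie in the subgroups generated by the N1- and the N2-torsion of X,
  and these sets have the same properties. If N = p^a, then B = \<langle>X\<rangle> is a finite abelian
  p-group. A subset Y of X chosen greedily with X \<subseteq> \<langle>Y\<rangle>B^p has p^|Y| \<le> |B : B^p| = |B[p]| \<le> p^r,
  because an elementary abelian subgroup of an abelian group with r generators has at most p^r
  elements. The Frattini argument gives B = \<langle>Y\<rangle>, and \<langle>Y\<rangle> \<subseteq> X^|Y| because X is closed under
  powers.\<close>

section \<open>Powers, torsion and generated subgroups\<close>

lemma (in group) int_pow_eq_of_cong: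
  assumes "x \<in> carrier G" "x [^] (N::nat) = \<one>" "[a = b] (mod int N)"
  shows "x [^] (a::int) = x [^] b"
proof -
  have "ord x dvd N" using assms(1,2) pow_eq_id by blast
  moreover have "int N dvd b - a" using assms(3) by (simp add: cong_iff_dvd_diff dvd_diff_commute)
  ultimately show ?thesis
    by (simp add: int_pow_eq[OF assms(1)]) (meson dvd_trans int_dvd_int_iff)
qed

lemma (in group) nat_pow_eq_of_cong:
  assumes "x \<in> carrier G" "x [^] (N::nat) = \<one>" "[a = b] (mod N)"
  shows "x [^] (a::nat) = x [^] b"
  using int_pow_eq_of_cong[OF assms(1,2), of "int a" "int b"] assms(3)
  by (simp add: int_pow_int cong_int_iff)

lemma (in group) subgroup_nat_pow_closed:
  assumes "subgroup K G" "k \<in> K"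
  shows "k [^] (n::nat) \<in> K"
  using subgroup_int_pow_closed[OF assms, of "int n"] by (simp add: int_pow_int)

lemma (in comm_group) subgroup_torsion:
  assumes "subgroup B G"
  shows "subgroup {b \<in> B. b [^] (n::nat) = \<one>} G"
proof -
  interpret B: subgroup B G by fact
  show ?thesis
    by (rule subgroupI) (auto simp: nat_pow_inv B.m_inv_closed B.m_closed nat_pow_distrib
        intro!: exI[of _ \<one>])
qed

lemma (in comm_group) subgroup_powers:
  assumes "subgroup B G"
  shows "subgroup ((\<lambda>b. b [^] (n::nat)) ` B) G"
proof -
  interpret B: subgroup B G by fact
  show ?thesis
  proof (rule subgroupI)
    fix x y assume "x \<in> (\<lambda>b. b [^] n) ` B" "y \<in> (\<lambda>b. b [^] n) ` B"
    then obtain b c where "x = b [^] n" "y = c [^] n" "b \<in> B" "c \<in> B" by blast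
    moreover have "b \<in> carrier G" "c \<in> carrier G" using \<open>b \<in> B\<close> \<open>c \<in> B\<close> by auto
    ultimately have "inv x = inv b [^] n" "x \<otimes> y = (b \<otimes> c) [^] n"
      by (simp_all add: nat_pow_inv nat_pow_distrib)
    then show "inv x \<in> (\<lambda>b. b [^] n) ` B" "x \<otimes> y \<in> (\<lambda>b. b [^] n) ` B"
      using \<open>b \<in> B\<close> \<open>c \<in> B\<close> by auto
  qed (use B.subgroup_axioms subgroup.one_closed in auto)
qed

lemma (in comm_group) generate_insert:
  assumes "s \<in> carrier G" "S \<subseteq> carrier G"
  shows "generate G (insert s S) = generate G {s} <#> generate G S"
proof
  have "subgroup (generate G {s} <#> generate G S) G"
    using assms by (intro mult_subgroups generate_is_subgroup) auto
  moreover have "insert s S \<subseteq> generate G {s} <#> generate G S"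
  proof
    fix x assume "x \<in> insert s S"
    then have "x = s \<otimes> \<one> \<and> s \<in> generate G {s} \<and> \<one> \<in> generate G S
             \<or> x = \<one> \<otimes> x \<and> \<one> \<in> generate G {s} \<and> x \<in> generate G S"
      using assms generate.incl[of s "{s}"] generate.one[of G S] generate.one[of G "{s}"]
        generate.incl[of x S] by auto
    then show "x \<in> generate G {s} <#> generate G S" unfolding set_mult_def by blast
  qed
  ultimately show "generate G (insert s S) \<subseteq> generate G {s} <#> generate G S"
    by (rule generate_subgroup_incl[rotated])
next
  have "generate G {s} \<subseteq> generate G (insert s S)" "generate G S \<subseteq> generate G (insert s S)"
    using mono_generate[of "{s}" "insert s S"] mono_generate[of S "insert s S"] by auto
  then show "generate G {s} <#> generate G S \<subseteq> generate G (insert s S)"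
    unfolding set_mult_def by (auto intro: generate.eng)
qed

lemma (in comm_group) generate_insertE:
  assumes "x \<in> generate G (insert s S)" "s \<in> carrier G" "S \<subseteq> carrier G"
  obtains n :: int and h where "h \<in> generate G S" "x = s [^] n \<otimes> h"
  using assms unfolding generate_insert[OF assms(2,3)] generate_pow[OF assms(2)] set_mult_def
  by blast

lemma (in comm_group) pow_mem_subgroup_of_coprime:
  assumes "subgroup K G" "y \<in> carrier G" "y [^] (a::nat) \<in> K" "y [^] (b::nat) \<in> K" "coprime a b"
  shows "y \<in> K"
proof -
  obtain u v where uv: "u * int a + v * int b = 1"
    using bezout_int[of "int a" "int b"] assms(5) by (auto simp: coprime_iff_gcd_eq_1)
  have "y = y [^] (u * int a + v * int b)" using uv assms(2) by simp
  also have "\<dots> = (y [^] int a) [^] u \<otimes> (y [^] int b) [^] v"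
    using assms(2) by (simp add: int_pow_mult int_pow_pow mult.commute)
  also have "\<dots> = (y [^] a) [^] u \<otimes> (y [^] b) [^] v" by (simp add: int_pow_int)
  also have "\<dots> \<in> K"
    using assms by (simp add: subgroup.m_closed subgroup_int_pow_closed)
  finally show ?thesis .
qed

section \<open>Product sets\<close>

lemma (in monoid) set_power_carrier:
  "W \<subseteq> carrier G \<Longrightarrow> set_power G W n \<subseteq> carrier G"
  by (induction n) auto

lemma (in monoid) finite_set_power: "finite W \<Longrightarrow> finite (set_power G W n)"
proof (induction n)
  case (Suc n)
  have "set_power G W (Suc n) = (\<lambda>(x, y). x \<otimes> y) ` (W \<times> set_power G W n)" by auto
  then show ?case using Suc by simp
qed simp

lemma (in monoid) set_power_mono:
  assumes "\<one> \<in> W" "W \<subseteq> carrier G" "n \<le> m"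
  shows "set_power G W n \<subseteq> set_power G W m"
  using assms(3)
proof (induction m rule: dec_induct)
  case (step m)
  have "set_power G W m \<subseteq> set_power G W (Suc m)"
    using set_power_carrier[OF assms(2)] assms(1) by force
  with step.IH show ?case by blast
qed simp

lemma (in comm_monoid) set_power_mult:
  assumes "W1 \<subseteq> carrier G" "W2 \<subseteq> carrier G" "\<And>a b. a \<in> W1 \<Longrightarrow> b \<in> W2 \<Longrightarrow> a \<otimes> b \<in> W"
    and "x \<in> set_power G W1 n" "y \<in> set_power G W2 n"
  shows "x \<otimes> y \<in> set_power G W n"
  using assms(4,5)
proof (induction n arbitrary: x y)
  case (Suc n)
  then obtain a x' b y' where x: "x = a \<otimes> x'" "a \<in> W1" "x' \<in> set_power G W1 n"
    and y: "y = b \<otimes> y'" "b \<in> W2" "y' \<in> set_power G W2 n" by auto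
  have "a \<in> carrier G" "b \<in> carrier G" "x' \<in> carrier G" "y' \<in> carrier G"
    using x y set_power_carrier assms(1,2) by blast+
  then have "x \<otimes> y = (a \<otimes> b) \<otimes> (x' \<otimes> y')"
    using x(1) y(1) by (simp add: m_ac)
  moreover have "a \<otimes> b \<in> W" "x' \<otimes> y' \<in> set_power G W n"
    using Suc.IH x y assms(3) by auto
  ultimately show ?case by auto
qed simp

lemma (in comm_group) generate_pow_image:
  assumes "A \<subseteq> carrier G" "a \<in> generate G A"
  shows "a [^] (u::nat) \<in> generate G ((\<lambda>x. x [^] u) ` A)"
  using assms(2)
proof (induction rule: generate.induct)
  case (inv h)
  then have "inv (h [^] u) \<in> generate G ((\<lambda>x. x [^] u) ` A)" by (auto intro: generate.inv)
  then show ?case using inv assms(1) by (simp add: nat_pow_inv subsetD)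
next
  case (eng h1 h2)
  then have "h1 \<in> carrier G" "h2 \<in> carrier G" using generate_in_carrier assms(1) by auto
  then show ?case using eng by (simp add: nat_pow_distrib generate.eng)
qed (auto intro: generate.one generate.incl)

lemma (in comm_group) generate_pow_exponent:
  assumes "A \<subseteq> carrier G" "\<And>x. x \<in> A \<Longrightarrow> x [^] (N::nat) = \<one>" "a \<in> generate G A"
  shows "a [^] N = \<one>"
proof -
  have "A \<subseteq> {b \<in> carrier G. b [^] N = \<one>}" using assms(1,2) by blast
  then have "generate G A \<subseteq> {b \<in> carrier G. b [^] N = \<one>}"
    using subgroup_torsion[OF subgroup_self] by (rule generate_subgroup_incl)
  then show ?thesis using assms(3) by blast
qed

lemma (in comm_group) generate_subset_set_power_card:
  assumes A: "A \<subseteq> carrier G" "\<And>x n. x \<in> A \<Longrightarrow> x [^] (n::nat) \<in> A"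
    "\<And>x. x \<in> A \<Longrightarrow> x [^] (N::nat) = \<one>" "N > 0"
    and "finite Y" "Y \<subseteq> A"
  shows "generate G Y \<subseteq> set_power G A (card Y)"
  using assms(5,6)
proof (induction Y rule: finite_induct)
  case (insert y Y)
  have y: "y \<in> A" "y \<in> carrier G" and Yc: "Y \<subseteq> carrier G" using insert A(1) by auto
  show ?case
  proof
    fix z assume "z \<in> generate G (insert y Y)"
    then obtain i :: int and h where h: "h \<in> generate G Y" and z: "z = y [^] i \<otimes> h"
      using generate_insertE y(2) Yc by blast
    have "[i = int (nat (i mod int N))] (mod int N)" using \<open>N > 0\<close> by (simp add: cong_def)
    then have "y [^] i = y [^] int (nat (i mod int N))"
      by (rule int_pow_eq_of_cong[OF y(2) A(3)[OF y(1)]])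
    then have "z = y [^] nat (i mod int N) \<otimes> h" using z by (simp only: int_pow_int)
    moreover have "y [^] nat (i mod int N) \<in> A" using A(2) y(1) by blast
    moreover have "h \<in> set_power G A (card Y)" using insert.IH insert.prems h by blast
    ultimately have "z \<in> set_power G A (Suc (card Y))" by auto
    then show "z \<in> set_power G A (card (insert y Y))" using insert.hyps by simp
  qed
qed (simp add: generate_empty)

section \<open>Elementary abelian subgroups of finitely generated abelian groups\<close>

lemma int_additive_subgroup_eq_multiples:
  fixes I :: "int set"
  assumes diff: "\<And>x y. x \<in> I \<Longrightarrow> y \<in> I \<Longrightarrow> x - y \<in> I" and "0 \<in> I"
  shows "\<exists>m. I = {n. m dvd n}"
proof -
  have neg: "- x \<in> I" if "x \<in> I" for x using diff[OF \<open>0 \<in> I\<close> that] by simp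
  have nat_mult: "int k * x \<in> I" if "x \<in> I" for x k
  proof (induction k)
    case (Suc k)
    then show ?case using diff[OF Suc neg[OF that]] by (simp add: algebra_simps)
  qed (simp add: \<open>0 \<in> I\<close>)
  have mult: "c * x \<in> I" if "x \<in> I" for x c
    using nat_mult[OF that, of "nat c"] neg[OF nat_mult[OF that, of "nat (- c)"]]
    by (cases "c \<ge> 0") auto
  show ?thesis
  proof (cases "I \<subseteq> {0}")
    case True
    then show ?thesis using \<open>0 \<in> I\<close> by (intro exI[of _ 0]) auto
  next
    case False
    then obtain x where "x \<in> I" "x \<noteq> 0" by blast
    then have ex: "\<exists>n::nat. n > 0 \<and> int n \<in> I"
      using neg by (intro exI[of _ "nat \<bar>x\<bar>"]) (auto simp: abs_if)
    define m where "m = (LEAST n::nat. n > 0 \<and> int n \<in> I)"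
    have m: "m > 0" "int m \<in> I" using LeastI_ex[OF ex] unfolding m_def by auto
    have least: "\<not> (k > 0 \<and> int k \<in> I)" if "k < m" for k
      using not_less_Least[of k "\<lambda>n. n > 0 \<and> int n \<in> I"] that unfolding m_def by blast
    have "n mod int m = 0" if "n \<in> I" for n
    proof (rule ccontr)
      assume "n mod int m \<noteq> 0"
      moreover have "n mod int m \<in> I"
        using diff[OF that mult[OF m(2)], of "n div int m"] by (simp add: minus_div_mult_eq_mod)
      moreover have "n mod int m \<ge> 0" "nat (n mod int m) < m" using m(1) by (simp_all add: nat_less_iff)
      ultimately have "n mod int m > 0" "n mod int m \<in> I" by linarith+
      then have "nat (n mod int m) > 0 \<and> int (nat (n mod int m)) \<in> I" by simp
      then show False using least \<open>nat (n mod int m) < m\<close> by blast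
    qed
    then have "I = {n. int m dvd n}" using mult[OF m(2)] by (auto simp: mult.commute)
    then show ?thesis by blast
  qed
qed

lemma dvd_diff_mult_of_dvd_prime_mult:
  fixes m a b :: int and p :: nat
  assumes "Factorial_Ring.prime p" "m dvd int p * a" "\<not> m dvd a" "m dvd int p * b"
  shows "\<exists>j<p. m dvd b - int j * a"
proof -
  have p: "Factorial_Ring.prime (int p)" using assms(1) by simp
  have "\<not> coprime m (int p)"
    using assms(2,3) by (auto simp: coprime_dvd_mult_right_iff)
  then have "int p dvd m" using p by (meson coprime_commute prime_imp_coprime)
  then obtain w where w: "m = int p * w" by blast
  have "int p \<noteq> 0" using p by auto
  then obtain a' b' where a': "a = w * a'" and b': "b = w * b'"
    using assms(2,4) w by (metis dvd_def dvd_mult_cancel_left)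
  have "\<not> int p dvd a'" using assms(3) w a' by auto
  then have "coprime (int p) a'" using p by (simp add: prime_imp_coprime)
  then obtain u v where uv: "u * int p + v * a' = 1"
    using bezout_int[of "int p" a'] by (auto simp: coprime_iff_gcd_eq_1)
  define j where "j = nat ((b' * v) mod int p)"
  have j: "int j = (b' * v) mod int p" "j < p"
    using \<open>int p \<noteq> 0\<close> unfolding j_def by (simp_all add: nat_less_iff)
  obtain q where q: "b' * v = int p * q + int j"
    using div_mult_mod_eq[of "b' * v" "int p"] j(1) by (metis mult.commute)
  have "b' - int j * a' = b' * (u * int p + v * a') - int j * a'" using uv by simp
  also have "\<dots> = b' * u * int p + (b' * v) * a' - int j * a'" by (simp add: algebra_simps)
  also have "\<dots> = int p * (b' * u + q * a')" by (simp add: q algebra_simps)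
  finally have "m dvd w * (b' - int j * a')" using w by simp
  then show ?thesis using a' b' j(2) by (metis right_diff_distrib mult.left_commute)
qed

lemma (in comm_group) int_pow_mult_nat_pow:
  assumes "s \<in> carrier G" "k \<in> carrier G"
  shows "(s [^] (c::int) \<otimes> k) [^] (n::nat) = s [^] (int n * c) \<otimes> k [^] n"
proof -
  have "(s [^] c) [^] n = s [^] (int n * c)"
    using assms(1) by (metis int_pow_int int_pow_pow mult.commute)
  then show ?thesis using assms by (simp add: nat_pow_distrib)
qed

lemma (in comm_group) exists_pow_coset_of_prime_exponent:
  fixes p :: nat
  assumes p: "Factorial_Ring.prime p" and K: "subgroup K G" and s: "s \<in> carrier G"
    and e0: "e0 \<in> generate G {s} <#> K" "e0 [^] p = \<one>" "e0 \<notin> K"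
    and e: "e \<in> generate G {s} <#> K" "e [^] p = \<one>"
  shows "\<exists>j<p. e \<otimes> inv (e0 [^] j) \<in> K"
proof -
  interpret K: subgroup K G by fact
  obtain a h0 where a: "e0 = s [^] (a::int) \<otimes> h0" "h0 \<in> K"
    using e0(1) unfolding generate_pow[OF s] set_mult_def by blast
  obtain b h where b: "e = s [^] (b::int) \<otimes> h" "h \<in> K"
    using e(1) unfolding generate_pow[OF s] set_mult_def by blast
  obtain m where I: "{n::int. s [^] n \<in> K} = {n. m dvd n}"
  proof (rule exE[OF int_additive_subgroup_eq_multiples])
    fix x y assume "x \<in> {n::int. s [^] n \<in> K}" "y \<in> {n::int. s [^] n \<in> K}"
    then show "x - y \<in> {n::int. s [^] n \<in> K}" using s by (simp add: int_pow_diff)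
  qed auto
  have p_mult_mem: "s [^] (int p * c) \<in> K" if "(s [^] c \<otimes> k) [^] p = \<one>" "k \<in> K" for c k
  proof -
    have "s [^] (int p * c) \<otimes> k [^] p = \<one>"
      using that int_pow_mult_nat_pow[OF s K.mem_carrier[OF that(2)]] by simp
    then have "inv (k [^] p) = s [^] (int p * c)" using that(2) s by (intro inv_equality) auto
    then show ?thesis using that(2) by (metis K.m_inv_closed subgroup_nat_pow_closed[OF K])
  qed
  have "m dvd int p * a" "m dvd int p * b" "\<not> m dvd a"
    using p_mult_mem[of a h0] p_mult_mem[of b h] a b e0(2,3) e(2) I
    by (auto simp: K.m_closed)
  then obtain j where j: "j < p" "m dvd b - int j * a"
    using dvd_diff_mult_of_dvd_prime_mult[OF p] by blast
  have "e \<otimes> inv (e0 [^] j) = s [^] b \<otimes> h \<otimes> inv (s [^] (int j * a) \<otimes> h0 [^] j)"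
    using a b int_pow_mult_nat_pow[OF s K.mem_carrier[OF a(2)], of a j] by simp
  also have "\<dots> = (s [^] b \<otimes> inv (s [^] (int j * a))) \<otimes> (h \<otimes> inv (h0 [^] j))"
    using a(2) b(2) s by (simp add: inv_mult m_ac)
  also have "\<dots> = s [^] (b - int j * a) \<otimes> (h \<otimes> inv (h0 [^] j))"
    using s by (simp add: int_pow_diff)
  also have "\<dots> \<in> K"
    using j(2) I a(2) b(2) by (auto intro!: K.m_closed K.m_inv_closed subgroup_nat_pow_closed[OF K])
  finally show ?thesis using j(1) by blast
qed

lemma (in comm_group) card_le_prime_mult_card_Int:
  fixes p :: nat
  assumes p: "Factorial_Ring.prime p" and E: "subgroup E G" "finite E" "\<forall>e\<in>E. e [^] p = \<one>"
    and K: "subgroup K G" and s: "s \<in> carrier G" and "E \<subseteq> generate G {s} <#> K"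
  shows "card E \<le> p * card (E \<inter> K)"
proof (cases "E \<subseteq> K")
  case True
  then show ?thesis using prime_gt_0_nat[OF p] by (simp add: Int_absorb2)
next
  case False
  then obtain e0 where e0: "e0 \<in> E" "e0 \<notin> K" by blast
  have "E \<subseteq> (\<Union>j<p. (\<lambda>h. e0 [^] j \<otimes> h) ` (E \<inter> K))"
  proof
    fix e assume "e \<in> E"
    then obtain j where j: "j < p" "e \<otimes> inv (e0 [^] j) \<in> K"
      using exists_pow_coset_of_prime_exponent[OF p K s] e0 E(3) assms(7) by blast
    have "e \<otimes> inv (e0 [^] j) \<in> E"
      using \<open>e \<in> E\<close> e0(1) E(1) by (simp add: subgroup.m_closed subgroup.m_inv_closed subgroup_nat_pow_closed)
    moreover have "e = e0 [^] j \<otimes> (e \<otimes> inv (e0 [^] j))"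
      using \<open>e \<in> E\<close> e0(1) E(1) subgroup.mem_carrier
      by (metis inv_solve_left' m_comm m_closed nat_pow_closed inv_closed)
    ultimately show "e \<in> (\<Union>j<p. (\<lambda>h. e0 [^] j \<otimes> h) ` (E \<inter> K))" using j by blast
  qed
  then have "card E \<le> card (\<Union>j<p. (\<lambda>h. e0 [^] j \<otimes> h) ` (E \<inter> K))"
    using E(2) by (intro card_mono) auto
  also have "\<dots> \<le> (\<Sum>j<p. card ((\<lambda>h. e0 [^] j \<otimes> h) ` (E \<inter> K)))"
    by (rule card_UN_le) simp
  also have "\<dots> \<le> (\<Sum>j<p. card (E \<inter> K))"
    by (intro sum_mono card_image_le) (use E(2) in simp)
  finally show ?thesis by simp
qed

lemma (in comm_group) card_prime_exponent_subgroup_le: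
  fixes p :: nat
  assumes p: "Factorial_Ring.prime p" and "finite S" "S \<subseteq> carrier G"
    and "subgroup E G" "finite E" "E \<subseteq> generate G S" "\<forall>e\<in>E. e [^] p = \<one>"
  shows "card E \<le> p ^ card S"
  using assms(2-7)
proof (induction S arbitrary: E rule: finite_induct)
  case empty
  then have "E \<subseteq> {\<one>}" by (simp add: generate_empty)
  then show ?case using card_mono[of "{\<one>}" E] by simp
next
  case (insert s S)
  have s: "s \<in> carrier G" and S: "S \<subseteq> carrier G" using insert.prems by auto
  have K: "subgroup (generate G S) G" using generate_is_subgroup[OF S] .
  have "card E \<le> p * card (E \<inter> generate G S)"
    using insert.prems generate_insert[OF s S] by (intro card_le_prime_mult_card_Int[OF p _ _ _ K s]) auto
  also have "card (E \<inter> generate G S) \<le> p ^ card S"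
    using insert.prems by (intro insert.IH[OF S] subgroups_Inter_pair[OF _ K]) auto
  finally show ?case using insert.hyps by simp
qed

section \<open>Finite abelian p-groups\<close>

lemma (in comm_group) card_le_card_powers_mult_card_torsion:
  assumes B: "subgroup B G" "finite B"
  shows "card B \<le> card ((\<lambda>b. b [^] (n::nat)) ` B) * card {b \<in> B. b [^] n = \<one>}"
proof -
  interpret B: subgroup B G by fact
  let ?T = "{b \<in> B. b [^] n = \<one>}"
  have fiber: "card {b \<in> B. b [^] n = c} \<le> card ?T" for c
  proof (cases "\<exists>b0\<in>B. b0 [^] n = c")
    case True
    then obtain b0 where b0: "b0 \<in> B" "b0 [^] n = c" by blast
    have "{b \<in> B. b [^] n = c} \<subseteq> (\<lambda>t. b0 \<otimes> t) ` ?T"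
    proof
      fix b assume b: "b \<in> {b \<in> B. b [^] n = c}"
      then have "(inv b0 \<otimes> b) [^] n = \<one>" "inv b0 \<otimes> b \<in> B"
        using b0 by (auto simp: nat_pow_distrib nat_pow_inv B.m_closed B.m_inv_closed)
      moreover have "b = b0 \<otimes> (inv b0 \<otimes> b)" using b b0 by (simp add: m_assoc[symmetric])
      ultimately show "b \<in> (\<lambda>t. b0 \<otimes> t) ` ?T" by blast
    qed
    then have "card {b \<in> B. b [^] n = c} \<le> card ((\<lambda>t. b0 \<otimes> t) ` ?T)"
      using B(2) by (intro card_mono) auto
    also have "\<dots> \<le> card ?T" by (rule card_image_le) (use B(2) in simp)
    finally show ?thesis .
  next
    case False
    then have "{b \<in> B. b [^] n = c} = {}" by blast
    then show ?thesis by (metis card.empty le0)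
  qed
  have "card B = card (\<Union>c\<in>(\<lambda>b. b [^] n) ` B. {b \<in> B. b [^] n = c})"
    by (rule arg_cong[where f = card]) auto
  also have "\<dots> \<le> (\<Sum>c\<in>(\<lambda>b. b [^] n) ` B. card {b \<in> B. b [^] n = c})"
    by (rule card_UN_le) (use B(2) in simp)
  also have "\<dots> \<le> (\<Sum>c\<in>(\<lambda>b. b [^] n) ` B. card ?T)" by (intro sum_mono fiber)
  finally show ?thesis by simp
qed

lemma (in comm_group) pow_cosets_disjoint:
  fixes p :: nat
  assumes p: "Factorial_Ring.prime p" and K: "subgroup K G" and y: "y \<in> carrier G" "y \<notin> K" "y [^] p \<in> K"
    and "i < j" "j < p"
  shows "(\<lambda>k. y [^] i \<otimes> k) ` K \<inter> (\<lambda>k. y [^] j \<otimes> k) ` K = {}"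
proof (rule ccontr)
  interpret K: subgroup K G by fact
  assume "(\<lambda>k. y [^] i \<otimes> k) ` K \<inter> (\<lambda>k. y [^] j \<otimes> k) ` K \<noteq> {}"
  then obtain k k' where kk: "k \<in> K" "k' \<in> K" "y [^] i \<otimes> k = y [^] j \<otimes> k'" by blast
  have kc: "k \<in> carrier G" "k' \<in> carrier G" using kk(1,2) by auto
  have "y [^] j = y [^] i \<otimes> y [^] (j - i)"
    using nat_pow_mult[OF y(1), of i "j - i"] \<open>i < j\<close> by (simp del: nat_pow_mult)
  then have "y [^] i \<otimes> k = y [^] i \<otimes> (y [^] (j - i) \<otimes> k')"
    using kk(3) y(1) kc by (metis m_assoc nat_pow_closed)
  then have "k = y [^] (j - i) \<otimes> k'" using y(1) kc by (metis l_cancel m_closed nat_pow_closed)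
  then have "y [^] (j - i) = k \<otimes> inv k'" using y(1) kc by (metis inv_solve_right nat_pow_closed)
  then have "y [^] (j - i) \<in> K" using kk by (simp add: K.m_closed K.m_inv_closed)
  moreover have "coprime (j - i) p"
    using assms(6,7) p by (metis coprime_commute nat_dvd_not_less prime_imp_coprime_nat zero_less_diff
        less_imp_diff_less)
  ultimately have "y \<in> K" using pow_mem_subgroup_of_coprime[OF K y(1)] y(3) by blast
  then show False using y(2) by blast
qed

lemma (in comm_group) prime_mult_card_le_card:
  fixes p :: nat
  assumes p: "Factorial_Ring.prime p" and K: "subgroup K G" and L: "subgroup L G" "finite L"
    and "K \<subseteq> L" "y \<in> L" "y \<notin> K" "y [^] p \<in> K"
  shows "p * card K \<le> card L"
proof -
  interpret K: subgroup K G by fact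
  interpret L: subgroup L G by fact
  have y: "y \<in> carrier G" using \<open>y \<in> L\<close> by auto
  define C where "C i = (\<lambda>k. y [^] i \<otimes> k) ` K" for i :: nat
  have "(\<Union>i<p. C i) \<subseteq> L"
    using \<open>K \<subseteq> L\<close> \<open>y \<in> L\<close> unfolding C_def
    by (auto intro!: L.m_closed subgroup_nat_pow_closed[OF L(1)])
  then have le: "card (\<Union>i<p. C i) \<le> card L" using L(2) by (rule card_mono[rotated])
  have "finite (C i)" for i unfolding C_def using \<open>K \<subseteq> L\<close> L(2) finite_subset by blast
  moreover have "C i \<inter> C j = {}" if "i < p" "j < p" "i \<noteq> j" for i j
    using pow_cosets_disjoint[OF p K y] assms(7,8) that unfolding C_def
    by (metis Int_commute linorder_neqE_nat)
  ultimately have "card (\<Union>i<p. C i) = (\<Sum>i<p. card (C i))"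
    by (intro card_UN_disjoint) auto
  moreover have "card (C i) = card K" for i
    unfolding C_def using y by (intro card_image inj_onI) (auto dest: K.mem_carrier)
  ultimately show ?thesis using le by simp
qed

lemma (in group) subset_generate_set_mult:
  assumes "Z \<subseteq> carrier G" "\<one> \<in> \<Phi>"
  shows "Z \<subseteq> generate G Z <#> \<Phi>"
proof
  fix z assume "z \<in> Z"
  then have "z = z \<otimes> \<one>" "z \<in> generate G Z" using assms(1) by (auto intro: generate.incl)
  then show "z \<in> generate G Z <#> \<Phi>" using assms(2) unfolding set_mult_def by blast
qed

lemma (in group) subset_set_mult_generate:
  "\<Phi> \<subseteq> carrier G \<Longrightarrow> \<Phi> \<subseteq> generate G Y <#> \<Phi>"
  unfolding set_mult_def by (force intro: generate.one)

lemma (in group) generate_set_mult_subset: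
  assumes "subgroup B G" "Z \<subseteq> B" "\<Phi> \<subseteq> B"
  shows "generate G Z <#> \<Phi> \<subseteq> B"
  using generate_subgroup_incl[OF assms(2,1)] assms(1,3) subgroup.m_closed[OF assms(1)]
  unfolding set_mult_def by blast

lemma (in comm_group) exists_subset_generate_set_mult:
  fixes p :: nat
  assumes p: "Factorial_Ring.prime p" and \<Phi>: "subgroup \<Phi> G" and B: "subgroup B G" "finite B"
    and "\<Phi> \<subseteq> B" "finite A" "A \<subseteq> B" "\<And>x. x \<in> A \<Longrightarrow> x [^] p \<in> \<Phi>"
  shows "\<exists>Y\<subseteq>A. A \<subseteq> generate G Y <#> \<Phi> \<and> p ^ card Y * card \<Phi> \<le> card (generate G Y <#> \<Phi>)"
  using assms(6-8)
proof (induction A rule: finite_induct)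
  case empty
  have "generate G {} <#> \<Phi> = \<Phi>"
    using \<Phi> by (simp add: generate_empty set_mult_def subgroup.mem_carrier)
  then show ?case by auto
next
  case (insert x A)
  then obtain Y where Y: "Y \<subseteq> A" "A \<subseteq> generate G Y <#> \<Phi>"
    and card: "p ^ card Y * card \<Phi> \<le> card (generate G Y <#> \<Phi>)" by auto
  have carrier: "B \<subseteq> carrier G" "\<Phi> \<subseteq> carrier G" using B(1) \<Phi> subgroup.subset by auto
  have sub: "subgroup (generate G Z <#> \<Phi>) G" if "Z \<subseteq> B" for Z
    using that carrier \<Phi> by (intro mult_subgroups generate_is_subgroup) auto
  show ?case
  proof (cases "x \<in> generate G Y <#> \<Phi>")
    case True
    then show ?thesis using Y card by blast
  next
    case False
    let ?Y = "insert x Y"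
    have YB: "Y \<subseteq> B" "?Y \<subseteq> B" using Y insert.prems by auto
    have mono: "generate G Y <#> \<Phi> \<subseteq> generate G ?Y <#> \<Phi>"
      by (intro mono_set_mult mono_generate) auto
    have new: "?Y \<subseteq> generate G ?Y <#> \<Phi>"
      using YB(2) carrier subgroup.one_closed[OF \<Phi>] by (intro subset_generate_set_mult) auto
    have "p * card (generate G Y <#> \<Phi>) \<le> card (generate G ?Y <#> \<Phi>)"
    proof (rule prime_mult_card_le_card[OF p sub[OF YB(1)] sub[OF YB(2)]])
      show "finite (generate G ?Y <#> \<Phi>)"
        using generate_set_mult_subset[OF B(1) YB(2) \<open>\<Phi> \<subseteq> B\<close>] B(2) by (rule finite_subset)
      show "x [^] p \<in> generate G Y <#> \<Phi>"
        using insert.prems subset_set_mult_generate[OF carrier(2)] by blast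
    qed (use False mono new in auto)
    moreover have "card ?Y = Suc (card Y)"
      using Y(1) insert finite_subset by (metis card_insert_disjoint in_mono)
    ultimately have "p ^ card ?Y * card \<Phi> \<le> card (generate G ?Y <#> \<Phi>)"
      using card by (simp add: mult.assoc) (meson le_trans mult_le_mono2)
    moreover have "insert x A \<subseteq> generate G ?Y <#> \<Phi>" using Y(2) mono new by blast
    ultimately show ?thesis using Y(1) by blast
  qed
qed

lemma (in comm_group) subgroup_subset_of_subset_set_mult_powers:
  fixes p :: nat
  assumes A: "subgroup A G" and B: "subgroup B G" "B \<subseteq> A <#> (\<lambda>b. b [^] p) ` B"
    and exp: "\<And>b. b \<in> B \<Longrightarrow> b [^] (p ^ n) = \<one>"
  shows "B \<subseteq> A"
proof -
  have powers: "\<exists>g\<in>A. \<exists>c\<in>B. b = g \<otimes> c [^] (p ^ m)" if "b \<in> B" for b m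
    using that
  proof (induction m arbitrary: b)
    case 0
    then have "b = \<one> \<otimes> b [^] (p ^ 0)" using B(1) by (simp add: subgroup.mem_carrier)
    then show ?case using 0 A subgroup.one_closed by blast
  next
    case (Suc m)
    then obtain g c where g: "g \<in> A" "c \<in> B" "b = g \<otimes> c [^] (p ^ m)" by blast
    with B(2) obtain g' d where g': "g' \<in> A" "d \<in> B" "c = g' \<otimes> d [^] p"
      unfolding set_mult_def by blast
    have carr: "g \<in> carrier G" "g' \<in> carrier G" "d \<in> carrier G"
      using g g' A B(1) by (auto dest: subgroup.mem_carrier)
    then have "b = (g \<otimes> g' [^] (p ^ m)) \<otimes> d [^] (p ^ Suc m)"
      using g(3) g'(3) by (simp add: nat_pow_distrib nat_pow_pow m_assoc mult.commute)
    moreover have "g \<otimes> g' [^] (p ^ m) \<in> A"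
      using g(1) g'(1) A by (simp add: subgroup.m_closed subgroup_nat_pow_closed)
    ultimately show ?case using g'(2) by blast
  qed
  show ?thesis
  proof
    fix b assume "b \<in> B"
    then obtain g c where "g \<in> A" "c \<in> B" "b = g \<otimes> c [^] (p ^ n)" using powers by blast
    then show "b \<in> A" using exp A by (simp add: subgroup.mem_carrier)
  qed
qed

lemma (in comm_group) le_card_generators_of_card_powers:
  fixes p :: nat
  assumes p: "Factorial_Ring.prime p" and S: "S \<subseteq> carrier G" "finite S" "generate G S = carrier G"
    and B: "subgroup B G" "finite B" and card: "p ^ n * card ((\<lambda>b. b [^] p) ` B) \<le> card B"
  shows "n \<le> card S"
proof -
  let ?\<Phi> = "(\<lambda>b. b [^] p) ` B"
  have torsion: "card {b \<in> B. b [^] p = \<one>} \<le> p ^ card S"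
  proof (rule card_prime_exponent_subgroup_le[OF p S(2,1) subgroup_torsion[OF B(1)]])
    show "{b \<in> B. b [^] p = \<one>} \<subseteq> generate G S" using S(3) subgroup.subset[OF B(1)] by blast
  qed (use B(2) in auto)
  note card
  also have "card B \<le> card ?\<Phi> * card {b \<in> B. b [^] p = \<one>}"
    by (rule card_le_card_powers_mult_card_torsion[OF B])
  also have "\<dots> \<le> card ?\<Phi> * p ^ card S" using torsion by simp
  finally have "p ^ n * card ?\<Phi> \<le> card ?\<Phi> * p ^ card S" .
  moreover have "card ?\<Phi> > 0" using B subgroup.one_closed[OF B(1)] by (auto simp: card_gt_0_iff)
  ultimately have "p ^ n \<le> p ^ card S" by (simp add: mult.commute)
  then show ?thesis using power_le_imp_le_exp[OF prime_gt_1_nat[OF p]] by blast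
qed

lemma (in comm_group) generate_subset_set_power_prime_power_exponent:
  fixes p a :: nat
  assumes p: "Factorial_Ring.prime p"
    and S: "S \<subseteq> carrier G" "finite S" "card S \<le> r" "generate G S = carrier G"
    and A: "A \<subseteq> carrier G" "finite A" "\<one> \<in> A" "\<And>x n. x \<in> A \<Longrightarrow> x [^] (n::nat) \<in> A"
      "\<And>x. x \<in> A \<Longrightarrow> x [^] (p ^ a) = \<one>"
  shows "generate G A \<subseteq> set_power G A r"
proof -
  define B where "B = generate G A"
  define \<Phi> where "\<Phi> = (\<lambda>b. b [^] p) ` B"
  have B: "subgroup B G" unfolding B_def using A(1) by (rule generate_is_subgroup)
  have \<Phi>: "subgroup \<Phi> G" "\<Phi> \<subseteq> B"
    unfolding \<Phi>_def using subgroup_powers[OF B] subgroup_nat_pow_closed[OF B] by auto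
  have p_pos: "p ^ a > 0" using p by (simp add: prime_gt_0_nat)
  have "B \<subseteq> set_power G A (card A)"
    unfolding B_def using generate_subset_set_power_card[OF A(1,4,5) p_pos A(2)] by blast
  then have finB: "finite B" using finite_set_power[OF A(2)] by (rule finite_subset)
  have AB: "A \<subseteq> B" unfolding B_def by (auto intro: generate.incl)
  obtain Y where Y: "Y \<subseteq> A" "A \<subseteq> generate G Y <#> \<Phi>"
    and card: "p ^ card Y * card \<Phi> \<le> card (generate G Y <#> \<Phi>)"
    using exists_subset_generate_set_mult[OF p \<Phi>(1) B finB \<Phi>(2) A(2) AB] AB
    unfolding \<Phi>_def by blast
  have Yc: "Y \<subseteq> carrier G" using Y(1) A(1) by blast
  have YB: "generate G Y <#> \<Phi> \<subseteq> B"
    using generate_set_mult_subset[OF B subset_trans[OF Y(1) AB] \<Phi>(2)] .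
  have "p ^ card Y * card \<Phi> \<le> card B" using card card_mono[OF finB YB] by linarith
  then have "card Y \<le> card S"
    unfolding \<Phi>_def by (rule le_card_generators_of_card_powers[OF p S(1,2,4) B finB])
  then have "card Y \<le> r" using S(3) by simp
  have "B \<subseteq> generate G Y <#> \<Phi>"
    unfolding B_def using Y(2) mult_subgroups[OF generate_is_subgroup[OF Yc] \<Phi>(1)]
    by (rule generate_subgroup_incl)
  moreover have "b [^] (p ^ a) = \<one>" if "b \<in> B" for b
    using generate_pow_exponent[OF A(1,5) that[unfolded B_def]] .
  ultimately have "B \<subseteq> generate G Y"
    unfolding \<Phi>_def by (rule subgroup_subset_of_subset_set_mult_powers[OF generate_is_subgroup[OF Yc] B])
  also have "\<dots> \<subseteq> set_power G A (card Y)"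
    using generate_subset_set_power_card[OF A(1,4,5) p_pos finite_subset[OF Y(1) A(2)] Y(1)] .
  also have "\<dots> \<subseteq> set_power G A r" using set_power_mono[OF A(3,1) \<open>card Y \<le> r\<close>] .
  finally show ?thesis unfolding B_def .
qed

section \<open>Sets closed under mixed powers\<close>

lemma prime_power_or_coprime_factors:
  fixes N :: nat
  assumes "N > 0"
  obtains p a where "Factorial_Ring.prime p" "N = p ^ a"
    | N1 N2 where "N = N1 * N2" "coprime N1 N2" "1 < N1" "1 < N2"
proof (cases "N = 1")
  case True
  then show ?thesis using that(1)[of 2 0] by simp
next
  case False
  then obtain p :: nat where p: "Factorial_Ring.prime p" "p dvd N"
    using prime_factor_nat by blast
  obtain y where y: "N = p ^ multiplicity p N * y" "\<not> p dvd y"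
    using multiplicity_decompose'[of N p] assms p(1) by (metis not_prime_unit not_gr0)
  have "multiplicity p N > 0" using p assms by (simp add: prime_multiplicity_gt_zero_iff)
  then have "1 < p ^ multiplicity p N" using p(1) by (metis one_less_power prime_gt_1_nat)
  moreover have "coprime (p ^ multiplicity p N) y" using p(1) y(2) by (simp add: prime_imp_coprime)
  moreover have "y > 0" using y(1) assms by (metis gr0I mult_0_right)
  ultimately show ?thesis using that y(1) p(1) by (cases "y = 1") auto
qed

text \<open>The properties of the image of a map multiplicative in each of k variables with values of
  exponent N that the argument uses.\<close>
definition mixing_set :: "('a, 'b) monoid_scheme \<Rightarrow> nat \<Rightarrow> nat \<Rightarrow> 'a set \<Rightarrow> bool" where
  "mixing_set G k N A \<longleftrightarrow> A \<subseteq> carrier G \<and> finite A \<and> \<one>\<^bsub>G\<^esub> \<in> A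
     \<and> (\<forall>x\<in>A. \<forall>n::nat. x [^]\<^bsub>G\<^esub> n \<in> A) \<and> (\<forall>x\<in>A. x [^]\<^bsub>G\<^esub> N = \<one>\<^bsub>G\<^esub>)
     \<and> (\<forall>x\<in>A. \<forall>y\<in>A. \<forall>e f::nat. N dvd e * f \<longrightarrow> x [^]\<^bsub>G\<^esub> (e ^ k) \<otimes>\<^bsub>G\<^esub> y [^]\<^bsub>G\<^esub> (f ^ k) \<in> A)"

lemma (in comm_group) mixing_set_restrict:
  assumes A: "mixing_set G k (M * L) A" and u: "[u = 1] (mod M)" "L dvd u"
  shows "mixing_set G k M {x \<in> A. x [^] M = \<one>}"
proof -
  have Ac: "A \<subseteq> carrier G" and mix: "\<And>x y e f. x \<in> A \<Longrightarrow> y \<in> A \<Longrightarrow> M * L dvd e * f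
      \<Longrightarrow> x [^] (e ^ k) \<otimes> y [^] (f ^ k) \<in> A"
    using A unfolding mixing_set_def by auto
  have pow_M: "(x [^] n) [^] M = \<one>" if "x \<in> carrier G" "x [^] M = \<one>" for x and n :: nat
    using that by (metis nat_pow_pow mult.commute nat_pow_one)
  have unit: "x [^] ((e * u) ^ k) = x [^] (e ^ k)" if "x \<in> carrier G" "x [^] M = \<one>" for x e
  proof (rule nat_pow_eq_of_cong[OF that])
    show "[(e * u) ^ k = e ^ k] (mod M)" using cong_pow[OF cong_scalar_left[OF u(1)]] by simp
  qed
  have "x [^] (e ^ k) \<otimes> y [^] (f ^ k) \<in> A"
    if "x \<in> A" "y \<in> A" "x [^] M = \<one>" "y [^] M = \<one>" "M dvd e * f" for x y e f
  proof -
    have "M * L dvd (e * u) * (f * u)"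
      using mult_dvd_mono[OF \<open>M dvd e * f\<close> dvd_mult[OF u(2), of u]] by (simp add: ac_simps)
    then have "x [^] ((e * u) ^ k) \<otimes> y [^] ((f * u) ^ k) \<in> A" by (rule mix[OF that(1,2)])
    moreover have "x [^] ((e * u) ^ k) = x [^] (e ^ k)" "y [^] ((f * u) ^ k) = y [^] (f ^ k)"
      using unit that Ac by auto
    ultimately show ?thesis by simp
  qed
  then show ?thesis
    using A pow_M Ac unfolding mixing_set_def
    by (auto simp: nat_pow_distrib subsetD)
qed

lemma (in comm_group) generate_subset_set_power_of_split:
  assumes "A1 \<subseteq> carrier G" "A2 \<subseteq> carrier G" "A \<subseteq> carrier G"
    and "\<And>x1 x2. x1 \<in> A1 \<Longrightarrow> x2 \<in> A2 \<Longrightarrow> x1 \<otimes> x2 \<in> A"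
    and "generate G A1 \<subseteq> set_power G A1 r" "generate G A2 \<subseteq> set_power G A2 r"
    and "(\<lambda>x. x [^] (u::nat)) ` A \<subseteq> A1" "(\<lambda>x. x [^] (v::nat)) ` A \<subseteq> A2"
    and "\<And>a. a \<in> generate G A \<Longrightarrow> a [^] (u + v) = a"
  shows "generate G A \<subseteq> set_power G A r"
proof
  fix a assume a: "a \<in> generate G A"
  have "generate G ((\<lambda>x. x [^] u) ` A) \<subseteq> generate G A1"
    "generate G ((\<lambda>x. x [^] v) ` A) \<subseteq> generate G A2"
    using assms(7,8) by (auto intro!: mono_generate)
  then have "a [^] u \<in> set_power G A1 r" "a [^] v \<in> set_power G A2 r"
    using generate_pow_image[OF assms(3) a, of u] generate_pow_image[OF assms(3) a, of v] assms(5,6)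
    by blast+
  then have "a [^] u \<otimes> a [^] v \<in> set_power G A r" using set_power_mult[OF assms(1,2,4)] by blast
  moreover have "a [^] u \<otimes> a [^] v = a"
    using assms(9)[OF a] generate_in_carrier[OF assms(3) a] by (simp add: nat_pow_mult)
  ultimately show "a \<in> set_power G A r" by simp
qed

lemma (in comm_group) generate_subset_set_power_coprime_split:
  assumes A: "mixing_set G k (N1 * N2) A" and "coprime N1 N2"
    and IH1: "\<And>B. mixing_set G k N1 B \<Longrightarrow> generate G B \<subseteq> set_power G B r"
    and IH2: "\<And>B. mixing_set G k N2 B \<Longrightarrow> generate G B \<subseteq> set_power G B r"
  shows "generate G A \<subseteq> set_power G A r"
proof -
  have Ac: "A \<subseteq> carrier G" and pow: "\<And>x n. x \<in> A \<Longrightarrow> x [^] (n::nat) \<in> A"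
    and exp: "\<And>x. x \<in> A \<Longrightarrow> x [^] (N1 * N2) = \<one>"
    and mix: "\<And>x y e f. x \<in> A \<Longrightarrow> y \<in> A \<Longrightarrow> N1 * N2 dvd e * f
      \<Longrightarrow> x [^] (e ^ k) \<otimes> y [^] (f ^ k) \<in> A"
    using A unfolding mixing_set_def by auto
  obtain u where u: "[u = 1] (mod N1)" "[u = 0] (mod N2)"
    using binary_chinese_remainder_nat[OF \<open>coprime N1 N2\<close>] by blast
  obtain v where v: "[v = 0] (mod N1)" "[v = 1] (mod N2)"
    using binary_chinese_remainder_nat[OF \<open>coprime N1 N2\<close>] by blast
  define A1 where "A1 = {x \<in> A. x [^] N1 = \<one>}"
  define A2 where "A2 = {x \<in> A. x [^] N2 = \<one>}"
  have kill: "x [^] n = \<one>" if "x \<in> A" "N1 * N2 dvd n" for x n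
    using nat_pow_eq_of_cong[of x "N1 * N2" n 0] that Ac exp by (auto simp: cong_0_iff)
  have unit: "x [^] (w ^ k) = x" if "x \<in> carrier G" "x [^] N = \<one>" "[w = 1] (mod N)" for x w and N :: nat
    using nat_pow_eq_of_cong[OF that(1,2) cong_pow[OF that(3), of k, unfolded power_one]] that(1) by simp
  show ?thesis
  proof (rule generate_subset_set_power_of_split[of A1 A2])
    show "generate G A1 \<subseteq> set_power G A1 r"
      using IH1 mixing_set_restrict[OF A u(1)] u(2) unfolding A1_def by (simp add: cong_0_iff)
    show "generate G A2 \<subseteq> set_power G A2 r"
      using IH2 mixing_set_restrict[OF A[unfolded mult.commute[of N1 N2]] v(2)] v(1)
      unfolding A2_def by (simp add: cong_0_iff)
    show "x1 \<otimes> x2 \<in> A" if "x1 \<in> A1" "x2 \<in> A2" for x1 x2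
    proof -
      have "N1 * N2 dvd v * u"
        using u(2) v(1) by (simp add: cong_0_iff mult_dvd_mono)
      then have "x1 [^] (u ^ k) \<otimes> x2 [^] (v ^ k) \<in> A"
        using mix that unfolding A1_def A2_def by (simp add: mult.commute)
      moreover have "x1 [^] (u ^ k) = x1" "x2 [^] (v ^ k) = x2"
        using that Ac unit u(1) v(2) unfolding A1_def A2_def by auto
      ultimately show ?thesis by simp
    qed
    have "N1 * N2 dvd u * N1" "N1 * N2 dvd v * N2"
      using u(2) v(1) by (simp_all add: cong_0_iff mult.commute)
    then show "(\<lambda>x. x [^] u) ` A \<subseteq> A1" "(\<lambda>x. x [^] v) ` A \<subseteq> A2"
      using pow kill Ac unfolding A1_def A2_def by (auto simp: nat_pow_pow subsetD)
    have "[u + v = 1] (mod N1 * N2)"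
      using cong_add[OF u(1) v(1)] cong_add[OF u(2) v(2)]
      by (intro coprime_cong_mult_nat \<open>coprime N1 N2\<close>) auto
    then show "a [^] (u + v) = a" if "a \<in> generate G A" for a
      using nat_pow_eq_of_cong[OF _ generate_pow_exponent[OF Ac exp that]] generate_in_carrier[OF Ac that]
      by simp
  qed (use Ac in \<open>auto simp: A1_def A2_def\<close>)
qed

lemma (in comm_group) mixing_set_generate_subset_set_power:
  assumes S: "S \<subseteq> carrier G" "finite S" "card S \<le> r" "generate G S = carrier G"
    and "N > 0" "mixing_set G k N A"
  shows "generate G A \<subseteq> set_power G A r"
  using assms(5,6)
proof (induction N arbitrary: A rule: less_induct)
  case (less N A)
  from less.prems(1) show ?case
  proof (cases rule: prime_power_or_coprime_factors)
    case (1 p a)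
    then show ?thesis
      using less.prems(2) unfolding mixing_set_def
      by (intro generate_subset_set_power_prime_power_exponent[OF 1(1) S]) auto
  next
    case (2 N1 N2)
    then show ?thesis
      using less.prems(2) less.IH[of N1] less.IH[of N2]
      by (intro generate_subset_set_power_coprime_split[of k N1 N2 A]) auto
  qed
qed

section \<open>Maps multiplicative in each variable\<close>

locale finite_multihom =
  fixes k :: nat and G :: "nat \<Rightarrow> ('a, 'b) monoid_scheme" and H :: "('c, 'd) monoid_scheme"
    and \<phi> :: "(nat \<Rightarrow> 'a) \<Rightarrow> 'c"
  assumes k_pos: "k \<ge> 1" and group: "\<And>i. i < k \<Longrightarrow> group (G i)"
    and finite: "\<And>i. i < k \<Longrightarrow> finite (carrier (G i))"
    and comm_group: "comm_group H" and multihom: "multihom k G H \<phi>"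
begin

sublocale H: comm_group H by (rule comm_group)

abbreviation tuples :: "(nat \<Rightarrow> 'a) set" where
  "tuples \<equiv> \<Pi>\<^sub>E i\<in>{..<k}. carrier (G i)"

lemma update_in_tuples: "g \<in> tuples \<Longrightarrow> i < k \<Longrightarrow> x \<in> carrier (G i) \<Longrightarrow> g(i := x) \<in> tuples"
  by (auto simp: PiE_iff extensional_def)

lemma pow_closed_tuples: "a \<in> tuples \<Longrightarrow> (\<lambda>i\<in>{..<k}. a i [^]\<^bsub>G i\<^esub> (e::nat)) \<in> tuples"
  using monoid.nat_pow_closed[OF group.is_monoid[OF group]] by auto

lemma phi_closed: "g \<in> tuples \<Longrightarrow> \<phi> g \<in> carrier H"
  using multihom unfolding multihom_def by blast

lemma phi_mult:
  "g \<in> tuples \<Longrightarrow> i < k \<Longrightarrow> x \<in> carrier (G i) \<Longrightarrow> y \<in> carrier (G i) \<Longrightarrow>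
    \<phi> (g(i := x \<otimes>\<^bsub>G i\<^esub> y)) = \<phi> (g(i := x)) \<otimes>\<^bsub>H\<^esub> \<phi> (g(i := y))"
  using multihom unfolding multihom_def by blast

lemma phi_one:
  assumes "g \<in> tuples" "i < k"
  shows "\<phi> (g(i := \<one>\<^bsub>G i\<^esub>)) = \<one>\<^bsub>H\<^esub>"
proof -
  interpret Gi: group "G i" using group assms(2) .
  have c: "\<phi> (g(i := \<one>\<^bsub>G i\<^esub>)) \<in> carrier H" using phi_closed update_in_tuples assms by simp
  have "\<phi> (g(i := \<one>\<^bsub>G i\<^esub>)) \<otimes>\<^bsub>H\<^esub> \<one>\<^bsub>H\<^esub> = \<phi> (g(i := \<one>\<^bsub>G i\<^esub>)) \<otimes>\<^bsub>H\<^esub> \<phi> (g(i := \<one>\<^bsub>G i\<^esub>))"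
    using phi_mult[OF assms Gi.one_closed Gi.one_closed] c by simp
  then show ?thesis using c by (metis H.l_cancel H.one_closed)
qed

lemma phi_pow:
  assumes "g \<in> tuples" "i < k" "x \<in> carrier (G i)"
  shows "\<phi> (g(i := x [^]\<^bsub>G i\<^esub> (n::nat))) = \<phi> (g(i := x)) [^]\<^bsub>H\<^esub> n"
proof (induction n)
  case 0
  show ?case unfolding nat_pow_0 by (rule phi_one[OF assms(1,2)])
next
  case (Suc n)
  interpret Gi: group "G i" using group assms(2) .
  have "\<phi> (g(i := x [^]\<^bsub>G i\<^esub> Suc n)) = \<phi> (g(i := x [^]\<^bsub>G i\<^esub> n \<otimes>\<^bsub>G i\<^esub> x))"
    by (simp only: Gi.nat_pow_Suc)
  also have "\<dots> = \<phi> (g(i := x [^]\<^bsub>G i\<^esub> n)) \<otimes>\<^bsub>H\<^esub> \<phi> (g(i := x))"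
    by (rule phi_mult[OF assms(1,2) Gi.nat_pow_closed[OF assms(3)] assms(3)])
  also have "\<dots> = \<phi> (g(i := x)) [^]\<^bsub>H\<^esub> Suc n" by (simp only: Suc.IH H.nat_pow_Suc)
  finally show ?case .
qed

lemma phi_pow_order: "g \<in> tuples \<Longrightarrow> \<phi> g [^]\<^bsub>H\<^esub> order (G 0) = \<one>\<^bsub>H\<^esub>"
proof -
  assume g: "g \<in> tuples"
  interpret G0: group "G 0" using group k_pos by simp
  have k: "0 < k" using k_pos by simp
  have g0: "g 0 \<in> carrier (G 0)" using g k by auto
  have "\<phi> g [^]\<^bsub>H\<^esub> order (G 0) = \<phi> (g(0 := g 0 [^]\<^bsub>G 0\<^esub> order (G 0)))"
    using phi_pow[OF g k g0] by simp
  also have "\<dots> = \<one>\<^bsub>H\<^esub>" using phi_one[OF g k] G0.pow_order_eq_1[OF g0] by simp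
  finally show ?thesis .
qed

lemma order_pos: "order (G 0) > 0"
proof -
  interpret G0: group "G 0" using group k_pos by simp
  show ?thesis using finite k_pos G0.one_closed unfolding order_def by (auto simp: card_gt_0_iff)
qed

lemma phi_pow_all:
  assumes a: "a \<in> tuples"
  shows "\<phi> (\<lambda>i\<in>{..<k}. a i [^]\<^bsub>G i\<^esub> (e::nat)) = \<phi> a [^]\<^bsub>H\<^esub> (e ^ k)"
proof -
  define F where "F j = (\<lambda>i\<in>{..<k}. if i < j then a i [^]\<^bsub>G i\<^esub> e else a i)" for j
  have "a i [^]\<^bsub>G i\<^esub> e \<in> carrier (G i)" if "i < k" for i
    by (intro monoid.nat_pow_closed[OF group.is_monoid[OF group[OF that]]]) (use a that in auto)
  then have F: "F j \<in> tuples" for j using a unfolding F_def PiE_iff by simp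
  have Fj: "\<phi> (F j) = \<phi> a [^]\<^bsub>H\<^esub> (e ^ j)" if "j \<le> k" for j
    using that
  proof (induction j)
    case 0
    have "F 0 = a" unfolding F_def using a by (auto simp: PiE_iff extensional_def)
    then show ?case using phi_closed[OF a] by simp
  next
    case (Suc j)
    have "j < k" using Suc.prems by simp
    then have j: "j < k" "a j \<in> carrier (G j)" using a by (simp_all add: PiE_iff)
    have "F (Suc j) = (F j)(j := a j [^]\<^bsub>G j\<^esub> e)" "(F j)(j := a j) = F j"
      unfolding F_def using j by (auto simp: fun_eq_iff)
    then have "\<phi> (F (Suc j)) = \<phi> (F j) [^]\<^bsub>H\<^esub> e" using phi_pow[OF F j] by simp
    then show ?case using Suc phi_closed[OF a] by (simp add: H.nat_pow_pow mult.commute)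
  qed
  have "F k = (\<lambda>i\<in>{..<k}. a i [^]\<^bsub>G i\<^esub> e)" unfolding F_def by auto
  then show ?thesis using Fj[of k] by simp
qed

lemma phi_eq_one_of_order_dvd:
  assumes t: "t \<in> tuples" and ij: "i < k" "j < k" "i \<noteq> j"
    and x: "x \<in> carrier (G i)" and y: "y \<in> carrier (G j)"
    and ti: "t i = x [^]\<^bsub>G i\<^esub> (e::nat)" and tj: "t j = y [^]\<^bsub>G j\<^esub> (f::nat)"
    and "order (G 0) dvd e * f"
  shows "\<phi> t = \<one>\<^bsub>H\<^esub>"
proof -
  define d where "d = t(i := x, j := y)"
  have t': "t(i := x) \<in> tuples" and d: "d \<in> tuples"
    unfolding d_def using update_in_tuples t ij x y by auto
  have "\<phi> t = \<phi> (t(i := x [^]\<^bsub>G i\<^esub> e))" using ti by (metis fun_upd_triv)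
  also have "\<dots> = \<phi> (t(i := x)) [^]\<^bsub>H\<^esub> e" by (rule phi_pow[OF t ij(1) x])
  also have "\<phi> (t(i := x)) = \<phi> ((t(i := x))(j := y [^]\<^bsub>G j\<^esub> f))"
    using tj ij(3) by (metis fun_upd_other fun_upd_triv)
  also have "\<dots> = \<phi> d [^]\<^bsub>H\<^esub> f" unfolding d_def by (rule phi_pow[OF t' ij(2) y])
  also have "(\<phi> d [^]\<^bsub>H\<^esub> f) [^]\<^bsub>H\<^esub> e = \<phi> d [^]\<^bsub>H\<^esub> (e * f)"
    using phi_closed[OF d] by (simp add: H.nat_pow_pow mult.commute)
  also have "\<dots> = \<phi> d [^]\<^bsub>H\<^esub> (0::nat)"
    using H.nat_pow_eq_of_cong[OF phi_closed[OF d] phi_pow_order[OF d], of "e * f" 0] \<open>order (G 0) dvd e * f\<close>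
    by (simp add: cong_0_iff)
  finally show ?thesis by simp
qed

definition mixed_tuple :: "(nat \<Rightarrow> 'a) \<Rightarrow> (nat \<Rightarrow> 'a) \<Rightarrow> nat set \<Rightarrow> nat set \<Rightarrow> nat \<Rightarrow> 'a" where
  "mixed_tuple a b P Q = (\<lambda>i\<in>{..<k}.
     (if i \<in> P then a i else \<one>\<^bsub>G i\<^esub>) \<otimes>\<^bsub>G i\<^esub> (if i \<in> Q then b i else \<one>\<^bsub>G i\<^esub>))"

lemma mixed_tuple_apply:
  assumes "a \<in> tuples" "b \<in> tuples" "i < k"
  shows "mixed_tuple a b P Q i =
    (if i \<in> P \<and> i \<in> Q then a i \<otimes>\<^bsub>G i\<^esub> b i else if i \<in> P then a i else if i \<in> Q then b i else \<one>\<^bsub>G i\<^esub>)"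
proof -
  interpret Gi: group "G i" using group assms(3) .
  show ?thesis using assms unfolding mixed_tuple_def by (auto simp: PiE_iff)
qed

lemma mixed_tuple_in_tuples: "a \<in> tuples \<Longrightarrow> b \<in> tuples \<Longrightarrow> mixed_tuple a b P Q \<in> tuples"
proof -
  assume "a \<in> tuples" "b \<in> tuples"
  have "mixed_tuple a b P Q i \<in> carrier (G i)" if "i < k" for i
  proof -
    interpret Gi: group "G i" using group that .
    show ?thesis using \<open>a \<in> tuples\<close> \<open>b \<in> tuples\<close> that by (simp add: mixed_tuple_apply PiE_iff)
  qed
  then show ?thesis unfolding PiE_iff by (simp add: mixed_tuple_def)
qed

lemma phi_mixed_tuple_disjoint:
  assumes a: "a \<in> tuples" and b: "b \<in> tuples"
    and cross: "\<And>t i j. t \<in> tuples \<Longrightarrow> i < k \<Longrightarrow> j < k \<Longrightarrow> i \<noteq> j \<Longrightarrow> t i = a i \<Longrightarrow> t j = b j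
      \<Longrightarrow> \<phi> t = \<one>\<^bsub>H\<^esub>"
    and disjoint: "P \<inter> Q \<inter> {..<k} = {}"
  shows "\<phi> (mixed_tuple a b P Q)
    = (if {..<k} \<subseteq> P then \<phi> a else \<one>\<^bsub>H\<^esub>) \<otimes>\<^bsub>H\<^esub> (if {..<k} \<subseteq> Q then \<phi> b else \<one>\<^bsub>H\<^esub>)"
proof -
  let ?t = "mixed_tuple a b P Q"
  have t: "?t \<in> tuples" by (rule mixed_tuple_in_tuples[OF a b])
  have apply_t: "?t i = (if i \<in> P then a i else if i \<in> Q then b i else \<one>\<^bsub>G i\<^esub>)" if "i < k" for i
    using mixed_tuple_apply[OF a b that] disjoint that by auto
  have outside: "?t i = a i" "?t i = b i" if "\<not> i < k" for i
    using a b that unfolding mixed_tuple_def by (auto simp: PiE_def extensional_def)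
  consider (neither) i where "i < k" "i \<notin> P" "i \<notin> Q" | (only_a) "{..<k} \<subseteq> P" | (only_b) "{..<k} \<subseteq> Q"
    | (both) i j where "i < k" "j < k" "i \<notin> P" "i \<in> Q" "j \<in> P" "j \<notin> Q"
    by blast
  then show ?thesis
  proof cases
    case neither
    then have "\<phi> ?t = \<one>\<^bsub>H\<^esub>" using phi_one[OF t neither(1)] apply_t[OF neither(1)] by (metis fun_upd_triv)
    moreover have "\<not> {..<k} \<subseteq> P" "\<not> {..<k} \<subseteq> Q" using neither by auto
    ultimately show ?thesis by simp
  next
    case only_a
    have "0 \<in> {..<k}" using k_pos by simp
    then have "\<not> {..<k} \<subseteq> Q" using only_a disjoint by blast
    moreover have "?t = a" using only_a apply_t outside by (intro ext) (metis lessThan_iff subsetD)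
    ultimately show ?thesis using only_a phi_closed[OF a] by simp
  next
    case only_b
    then have "\<forall>i<k. i \<notin> P" using disjoint by auto
    then have "?t = b" using apply_t outside only_b by (intro ext) (metis lessThan_iff subsetD)
    moreover have "\<not> {..<k} \<subseteq> P" using \<open>\<forall>i<k. i \<notin> P\<close> k_pos by (auto dest: subsetD[of _ _ 0])
    ultimately show ?thesis using only_b phi_closed[OF b] by simp
  next
    case both
    then have "\<phi> ?t = \<one>\<^bsub>H\<^esub>" using cross[OF t both(2,1)] apply_t by auto
    moreover have "\<not> {..<k} \<subseteq> P" "\<not> {..<k} \<subseteq> Q" using both by auto
    ultimately show ?thesis by simp
  qed
qed

text \<open>Expanding the coordinates in P \<inter> Q one at a time; every term with both an a- and a
  b-coordinate vanishes.\<close>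
lemma phi_mixed_tuple:
  assumes a: "a \<in> tuples" and b: "b \<in> tuples"
    and cross: "\<And>t i j. t \<in> tuples \<Longrightarrow> i < k \<Longrightarrow> j < k \<Longrightarrow> i \<noteq> j \<Longrightarrow> t i = a i \<Longrightarrow> t j = b j
      \<Longrightarrow> \<phi> t = \<one>\<^bsub>H\<^esub>"
  shows "\<phi> (mixed_tuple a b P Q)
    = (if {..<k} \<subseteq> P then \<phi> a else \<one>\<^bsub>H\<^esub>) \<otimes>\<^bsub>H\<^esub> (if {..<k} \<subseteq> Q then \<phi> b else \<one>\<^bsub>H\<^esub>)"
proof (induction "card (P \<inter> Q \<inter> {..<k})" arbitrary: P Q)
  case 0
  have "finite (P \<inter> Q \<inter> {..<k})" by simp
  then have "P \<inter> Q \<inter> {..<k} = {}" using 0 by (simp add: card_eq_0_iff)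
  from phi_mixed_tuple_disjoint[OF a b cross this] show ?case .
next
  case (Suc n)
  then obtain i where i: "i \<in> P" "i \<in> Q" "i < k" by (metis Int_iff all_not_in_conv card.empty lessThan_iff nat.distinct(1))
  interpret Gi: group "G i" using group i(3) .
  have ab: "a i \<in> carrier (G i)" "b i \<in> carrier (G i)" using a b i(3) by auto
  let ?t = "mixed_tuple a b P Q"
  have upd: "?t(i := a i) = mixed_tuple a b P (Q - {i})" "?t(i := b i) = mixed_tuple a b (P - {i}) Q"
    "?t(i := a i \<otimes>\<^bsub>G i\<^esub> b i) = ?t"
    unfolding mixed_tuple_def using i ab by (auto simp: fun_eq_iff)
  have "\<phi> ?t = \<phi> (?t(i := a i)) \<otimes>\<^bsub>H\<^esub> \<phi> (?t(i := b i))"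
    using phi_mult[OF mixed_tuple_in_tuples[OF a b, of P Q] i(3) ab] unfolding upd(3) .
  then have "\<phi> ?t = \<phi> (mixed_tuple a b P (Q - {i})) \<otimes>\<^bsub>H\<^esub> \<phi> (mixed_tuple a b (P - {i}) Q)"
    unfolding upd(1,2) .
  moreover have "P \<inter> (Q - {i}) \<inter> {..<k} = P \<inter> Q \<inter> {..<k} - {i}"
    "(P - {i}) \<inter> Q \<inter> {..<k} = P \<inter> Q \<inter> {..<k} - {i}" by auto
  then have "n = card (P \<inter> (Q - {i}) \<inter> {..<k})" "n = card ((P - {i}) \<inter> Q \<inter> {..<k})"
    using Suc.hyps(2) i by (simp_all add: card_Diff_singleton)
  moreover have "\<not> {..<k} \<subseteq> Q - {i}" "\<not> {..<k} \<subseteq> P - {i}" using i(3) by auto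
  ultimately show ?case using Suc.hyps(1) phi_closed[OF a] phi_closed[OF b] by simp
qed

lemma phi_mult_tuples:
  assumes "a \<in> tuples" "b \<in> tuples"
    and "\<And>t i j. t \<in> tuples \<Longrightarrow> i < k \<Longrightarrow> j < k \<Longrightarrow> i \<noteq> j \<Longrightarrow> t i = a i \<Longrightarrow> t j = b j
      \<Longrightarrow> \<phi> t = \<one>\<^bsub>H\<^esub>"
  shows "\<phi> (\<lambda>i\<in>{..<k}. a i \<otimes>\<^bsub>G i\<^esub> b i) = \<phi> a \<otimes>\<^bsub>H\<^esub> \<phi> b"
proof -
  have "mixed_tuple a b {..<k} {..<k} = (\<lambda>i\<in>{..<k}. a i \<otimes>\<^bsub>G i\<^esub> b i)"
    unfolding mixed_tuple_def by auto
  then show ?thesis using phi_mixed_tuple[OF assms, where P = "{..<k}" and Q = "{..<k}"] by simp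
qed

lemma one_in_image: "\<one>\<^bsub>H\<^esub> \<in> \<phi> ` tuples"
proof -
  have k: "0 < k" using k_pos by simp
  define g where "g = (\<lambda>i\<in>{..<k}. \<one>\<^bsub>G i\<^esub>)"
  have g: "g \<in> tuples" unfolding g_def using group by (auto intro: group.is_monoid monoid.one_closed)
  have "g(0 := \<one>\<^bsub>G 0\<^esub>) = g" unfolding g_def using k by auto
  then show ?thesis using phi_one[OF g k] g by (metis image_eqI)
qed

lemma pow_in_image: "x \<in> \<phi> ` tuples \<Longrightarrow> x [^]\<^bsub>H\<^esub> (n::nat) \<in> \<phi> ` tuples"
proof -
  assume "x \<in> \<phi> ` tuples"
  then obtain g where g: "g \<in> tuples" "x = \<phi> g" by blast
  have k: "0 < k" using k_pos by simp
  interpret G0: group "G 0" using group k .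
  have g0: "g 0 \<in> carrier (G 0)" using g k by auto
  have "x [^]\<^bsub>H\<^esub> n = \<phi> (g(0 := g 0 [^]\<^bsub>G 0\<^esub> n))" using phi_pow[OF g(1) k g0] g(2) by simp
  then show ?thesis using update_in_tuples[OF g(1) k G0.nat_pow_closed[OF g0]] by simp
qed

lemma mixed_powers_in_image:
  assumes a: "a \<in> tuples" and b: "b \<in> tuples" and "order (G 0) dvd e * f"
  shows "\<phi> a [^]\<^bsub>H\<^esub> (e ^ k) \<otimes>\<^bsub>H\<^esub> \<phi> b [^]\<^bsub>H\<^esub> (f ^ k) \<in> \<phi> ` tuples"
proof -
  let ?a = "\<lambda>i\<in>{..<k}. a i [^]\<^bsub>G i\<^esub> e" and ?b = "\<lambda>i\<in>{..<k}. b i [^]\<^bsub>G i\<^esub> f"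
  have ab: "?a \<in> tuples" "?b \<in> tuples" using pow_closed_tuples a b by auto
  have "\<phi> (\<lambda>i\<in>{..<k}. ?a i \<otimes>\<^bsub>G i\<^esub> ?b i) = \<phi> ?a \<otimes>\<^bsub>H\<^esub> \<phi> ?b"
  proof (rule phi_mult_tuples[OF ab])
    fix t i j assume "t \<in> tuples" "i < k" "j < k" "i \<noteq> j" "t i = ?a i" "t j = ?b j"
    then show "\<phi> t = \<one>\<^bsub>H\<^esub>"
      using a b \<open>order (G 0) dvd e * f\<close>
      by (intro phi_eq_one_of_order_dvd[where x = "a i" and y = "b j" and e = e and f = f]) auto
  qed
  then have "\<phi> a [^]\<^bsub>H\<^esub> (e ^ k) \<otimes>\<^bsub>H\<^esub> \<phi> b [^]\<^bsub>H\<^esub> (f ^ k) = \<phi> (\<lambda>i\<in>{..<k}. ?a i \<otimes>\<^bsub>G i\<^esub> ?b i)"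
    by (simp only: phi_pow_all[OF a] phi_pow_all[OF b])
  moreover have "(\<lambda>i\<in>{..<k}. ?a i \<otimes>\<^bsub>G i\<^esub> ?b i) \<in> tuples"
    using monoid.m_closed[OF group.is_monoid[OF group]] ab by (simp add: PiE_iff)
  ultimately show ?thesis by (rule image_eqI)
qed

lemma mixing_set_image: "mixing_set H k (order (G 0)) (\<phi> ` tuples)"
  unfolding mixing_set_def
proof (intro conjI ballI allI impI)
  show "\<phi> ` tuples \<subseteq> carrier H" using phi_closed by blast
  show "finite (\<phi> ` tuples)" using finite by (intro finite_imageI finite_PiE) auto
  show "x [^]\<^bsub>H\<^esub> order (G 0) = \<one>\<^bsub>H\<^esub>" if "x \<in> \<phi> ` tuples" for x
    using that phi_pow_order by blast
  show "x [^]\<^bsub>H\<^esub> (e ^ k) \<otimes>\<^bsub>H\<^esub> y [^]\<^bsub>H\<^esub> (f ^ k) \<in> \<phi> ` tuples"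
    if "x \<in> \<phi> ` tuples" "y \<in> \<phi> ` tuples" "order (G 0) dvd e * f" for x y e f
    using that mixed_powers_in_image by blast
qed (use one_in_image pow_in_image in simp_all)

end

theorem proposition6p1:
  fixes k r :: nat and G :: "nat \<Rightarrow> ('a, 'b) monoid_scheme" and H :: "('c, 'd) monoid_scheme"
    and \<phi> :: "(nat \<Rightarrow> 'a) \<Rightarrow> 'c"
  assumes "k \<ge> 1" and "r \<ge> 1"
    and "\<And>i. i < k \<Longrightarrow> nilpotent_group (G i) \<and> finite (carrier (G i))"
    and "comm_group H" and "rank_le H r"
    and "multihom k G H \<phi>"
  shows "generate H (\<phi> ` (\<Pi>\<^sub>E i\<in>{..<k}. carrier (G i)))
           \<subseteq> set_power H (\<phi> ` (\<Pi>\<^sub>E i\<in>{..<k}. carrier (G i))) r"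
proof -
  interpret finite_multihom k G H \<phi>
    using assms(1,3,4,6) unfolding finite_multihom_def nilpotent_group_def by blast
  obtain S where S: "S \<subseteq> carrier H" "finite S" "card S \<le> r" "generate H S = carrier H"
    using assms(5) unfolding rank_le_def by blast
  show ?thesis by (rule H.mixing_set_generate_subset_set_power[OF S order_pos mixing_set_image])
qed

end
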